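(* Let $k$ be a field, $Q=(Q_0,Q_1)$ a quiver, and $\widehat{T}_{\Sigma}(V)$ the associated complete tensor algebra (complete path algebra). Let $G$ be a homogeneous group of continuous algebra automorphisms of $\widehat{T}_{\Sigma}(V)$ which is invariant on $\Sigma$. Let $\omega$ be a space of path of length $m\ge 1$, and fix, for every subpath $\omega'$ of $\omega$, a space of irreducible invariants $V^G_{\omega',\mathrm{irr}}$. Then the canonical map $$\psi_{\omega}:\bigoplus_{p} V^G_{\omega,p,\mathrm{irr}}\longrightarrow V^G_{\omega},$$ where $p$ runs through all ordered partitions of $m$, is surjective.
   Context: $k$ is a discrete topological field. For $i,j\in Q_0$, $VQ_{i,j}$ is the $k$-vector space spanned by the arrows of $Q$ from $i$ to $j$. $\Sigma=\prod_{i\in Q_0}ke_i$ (a topologically semisimple pseudocompact algebra), $V=\prod_{i,j\in Q_0}VQ_{i,j}$ (a pseudocompact $\Sigma$-bimodule), $V^{\widehat{\otimes}_0}=\Sigma$, $V^{\widehat{\otimes}_n}=V\widehat{\otimes}_{\Sigma}V^{\widehat{\otimes}_{n-1}}$ (completed tensor product over $\Sigma$), and $\widehat{T}_{\Sigma}(V)=\prod_{n\ge0}V^{\widehat{\otimes}_n}$ with the product topology and multiplication given by the completed tensor product. A continuous algebra automorphism $g$ is homogeneous if $g(V^{\widehat{\otimes}_n})=V^{\widehat{\otimes}_n}$ for all $n\in\mathbb{N}$; a group is homogeneous if all its elements are. $G$ is invariant on $\Sigma$ means every element of $G$ acts as the identity on $\Sigma$; then each $V^{\widehat{\otimes}_n}$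 is a $kG$-module and $G$ preserves the subspaces below. For a $G$-stable subspace $W$, $W^G$ denotes the fixed points. An arrow space is a nonzero $V_a=VQ_{i,j}$ (from $i$ to $j$). For a sequence of arrow spaces $V_{a_1},\dots,V_{a_m}$ with $V_{a_n}=VQ_{i_{n-1},i_n}$, the space $V_\omega=V_{a_m}\widehat{\otimes}_\Sigma\cdots\widehat{\otimes}_\Sigma V_{a_1}\subseteq V^{\widehat{\otimes}_m}$ is a space of path $\omega$ from $i_0$ to $i_m$ of length $m$; spaces of paths contained in $V_\omega$ of the form $V_{a_t}\widehat{\otimes}_\Sigma\cdots\widehat{\otimes}_\Sigma V_{a_s}$ are its subpaths. A 2-partition $\omega=\omega_2\omega_1$ is a pair of subpaths with $V_\omega=V_{\omega_2}\widehat{\otimes}_\Sigma V_{\omega_1}$; $\varphi_{\omega_1,\omega_2}:V^G_{\omega_2}\widehat{\otimes}_\Sigma V^G_{\omega_1}\to V^G_\omega$ is the canonical map (multiplication), and $\varphi_\omega=\sum_{\omega_2\omega_1=\omega}\varphi_{\omega_1,\omega_2}$. The image of $\varphi_\omega$ is the space of composite invariants, and a space of irreducible invariants $V^G_{\omega,\mathrm{irr}}$ is any fixed complement of $\mathrm{Im}\,\varphi_\omega$ in $V^G_\omega$ (for length $1$, $\varphi_\omega=0$ and $V^G_{\omega,\mathrm{irr}}=V^G_\omega$). For an ordered partition $p=(m_l,\dots,m_1)$ of $m$ into positive integers, write $\omega=\omega_{m_l}\cdots\omega_{m_1}$ with $\omega_{m_t}$ the unique subpath of length $m_t$ in this position,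 and set $V^G_{\omega,p,\mathrm{irr}}=V^G_{\omega_{m_l},\mathrm{irr}}\widehat{\otimes}_\Sigma\cdots\widehat{\otimes}_\Sigma V^G_{\omega_{m_1},\mathrm{irr}}$. The map $\psi_\omega$ is the sum of the canonical (multiplication) maps $V^G_{\omega,p,\mathrm{irr}}\to V^G_\omega$. *)

theory Defs
  imports "HOL-Analysis.Analysis"
begin

(* A path is a pair (i, [a1,...,am]) : start vertex i, arrows in order of
   traversal (a1 first).  The complete path algebra \<widehat>T_\<Sigma>(V) is modelled
   as functions from paths to k vanishing on non-composable pairs
   (= \<Prod>_n V^{\<otimes>n} for a locally finite quiver). *)

fun pvalid :: "('a \<Rightarrow> 'v) \<Rightarrow> ('a \<Rightarrow> 'v) \<Rightarrow> 'v \<Rightarrow> 'a list \<Rightarrow> bool" where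
  "pvalid s t i [] = True"
| "pvalid s t i (a # as) = (s a = i \<and> pvalid s t (t a) as)"

fun pend :: "('a \<Rightarrow> 'v) \<Rightarrow> 'v \<Rightarrow> 'a list \<Rightarrow> 'v" where
  "pend t i [] = i"
| "pend t i (a # as) = pend t (t a) as"

fun pverts :: "('a \<Rightarrow> 'v) \<Rightarrow> 'v \<Rightarrow> 'a list \<Rightarrow> 'v list" where
  "pverts t i [] = [i]"
| "pverts t i (a # as) = i # pverts t (t a) as"

definition cpa_carrier :: "('a \<Rightarrow> 'v) \<Rightarrow> ('a \<Rightarrow> 'v) \<Rightarrow> ('v \<times> 'a list \<Rightarrow> 'k::field) set" where
  "cpa_carrier s t = {f. \<forall>i as. \<not> pvalid s t i as \<longrightarrow> f (i, as) = 0}"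

definition cpa_zero :: "'v \<times> 'a list \<Rightarrow> 'k::field" where
  "cpa_zero = (\<lambda>_. 0)"

definition cpa_add :: "('v \<times> 'a list \<Rightarrow> 'k::field) \<Rightarrow> ('v \<times> 'a list \<Rightarrow> 'k) \<Rightarrow> ('v \<times> 'a list \<Rightarrow> 'k)" where
  "cpa_add f g = (\<lambda>p. f p + g p)"

definition cpa_scale :: "'k::field \<Rightarrow> ('v \<times> 'a list \<Rightarrow> 'k) \<Rightarrow> ('v \<times> 'a list \<Rightarrow> 'k)" where
  "cpa_scale c f = (\<lambda>p. c * f p)"

(* multiplication: (f \<cdot> g) = f after g, i.e. g lives on the first part of the path *)
definition cpa_mult :: "('a \<Rightarrow> 'v) \<Rightarrow> ('v \<times> 'a list \<Rightarrow> 'k::field) \<Rightarrow> ('v \<times> 'a list \<Rightarrow> 'k) \<Rightarrow> ('v \<times> 'a list \<Rightarrow> 'k)" where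
  "cpa_mult t f g = (\<lambda>(i, as). \<Sum>j\<le>length as. f (pend t i (take j as), drop j as) * g (i, take j as))"

definition cpa_one :: "'v \<times> 'a list \<Rightarrow> 'k::field" where
  "cpa_one = (\<lambda>(i, as). if as = [] then 1 else 0)"

definition cpa_top :: "('v \<times> 'a list \<Rightarrow> 'k::field) topology" where
  "cpa_top = product_topology (\<lambda>_. discrete_topology UNIV) UNIV"

definition cpa_deg :: "('a \<Rightarrow> 'v) \<Rightarrow> ('a \<Rightarrow> 'v) \<Rightarrow> nat \<Rightarrow> ('v \<times> 'a list \<Rightarrow> 'k::field) set" where
  "cpa_deg s t n = {f \<in> cpa_carrier s t. \<forall>i as. f (i, as) \<noteq> 0 \<longrightarrow> length as = n}"

definition cpa_aut :: "('a \<Rightarrow> 'v) \<Rightarrow> ('a \<Rightarrow> 'v) \<Rightarrow> (('v \<times> 'a list \<Rightarrow> 'k::field) \<Rightarrow> ('v \<times> 'a list \<Rightarrow> 'k)) \<Rightarrow> bool" where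
  "cpa_aut s t g \<longleftrightarrow>
     bij_betw g (cpa_carrier s t) (cpa_carrier s t)
   \<and> (\<forall>f\<in>cpa_carrier s t. \<forall>h\<in>cpa_carrier s t. g (cpa_add f h) = cpa_add (g f) (g h))
   \<and> (\<forall>c. \<forall>f\<in>cpa_carrier s t. g (cpa_scale c f) = cpa_scale c (g f))
   \<and> (\<forall>f\<in>cpa_carrier s t. \<forall>h\<in>cpa_carrier s t. g (cpa_mult t f h) = cpa_mult t (g f) (g h))
   \<and> g cpa_one = cpa_one
   \<and> continuous_map (subtopology cpa_top (cpa_carrier s t)) (subtopology cpa_top (cpa_carrier s t)) g"

definition cpa_aut_group :: "('a \<Rightarrow> 'v) \<Rightarrow> ('a \<Rightarrow> 'v) \<Rightarrow> (('v \<times> 'a list \<Rightarrow> 'k::field) \<Rightarrow> ('v \<times> 'a list \<Rightarrow> 'k)) set \<Rightarrow> bool" where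
  "cpa_aut_group s t G \<longleftrightarrow>
     (\<forall>g\<in>G. cpa_aut s t g)
   \<and> (\<exists>e\<in>G. \<forall>f\<in>cpa_carrier s t. e f = f)
   \<and> (\<forall>g\<in>G. \<forall>h\<in>G. \<exists>c\<in>G. \<forall>f\<in>cpa_carrier s t. c f = g (h f))
   \<and> (\<forall>g\<in>G. \<exists>h\<in>G. \<forall>f\<in>cpa_carrier s t. h (g f) = f)"

definition homogeneous_group :: "('a \<Rightarrow> 'v) \<Rightarrow> ('a \<Rightarrow> 'v) \<Rightarrow> (('v \<times> 'a list \<Rightarrow> 'k::field) \<Rightarrow> ('v \<times> 'a list \<Rightarrow> 'k)) set \<Rightarrow> bool" where
  "homogeneous_group s t G \<longleftrightarrow> (\<forall>g\<in>G. \<forall>n. g ` cpa_deg s t n = cpa_deg s t n)"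

(* acts as the identity on \<Sigma> = V^{\<otimes>0} *)
definition invariant_on_Sigma :: "('a \<Rightarrow> 'v) \<Rightarrow> ('a \<Rightarrow> 'v) \<Rightarrow> (('v \<times> 'a list \<Rightarrow> 'k::field) \<Rightarrow> ('v \<times> 'a list \<Rightarrow> 'k)) set \<Rightarrow> bool" where
  "invariant_on_Sigma s t G \<longleftrightarrow> (\<forall>g\<in>G. \<forall>f\<in>cpa_deg s t 0. g f = f)"

(* a space of path is given by its vertex sequence i_0,...,i_m (m \<ge> 1),
   with every arrow space VQ_{i_{n-1},i_n} nonzero *)
definition is_path_space :: "('a \<Rightarrow> 'v) \<Rightarrow> ('a \<Rightarrow> 'v) \<Rightarrow> 'v list \<Rightarrow> bool" where
  "is_path_space s t w \<longleftrightarrow> 2 \<le> length w \<and>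
     (\<forall>n < length w - 1. \<exists>a. s a = w ! n \<and> t a = w ! Suc n)"

definition Vsp :: "('a \<Rightarrow> 'v) \<Rightarrow> ('a \<Rightarrow> 'v) \<Rightarrow> 'v list \<Rightarrow> ('v \<times> 'a list \<Rightarrow> 'k::field) set" where
  "Vsp s t w = {f \<in> cpa_carrier s t. \<forall>i as. f (i, as) \<noteq> 0 \<longrightarrow> pverts t i as = w}"

definition VG :: "('a \<Rightarrow> 'v) \<Rightarrow> ('a \<Rightarrow> 'v) \<Rightarrow> (('v \<times> 'a list \<Rightarrow> 'k::field) \<Rightarrow> ('v \<times> 'a list \<Rightarrow> 'k)) set \<Rightarrow> 'v list \<Rightarrow> ('v \<times> 'a list \<Rightarrow> 'k) set" where
  "VG s t G w = {f \<in> Vsp s t w. \<forall>g\<in>G. g f = f}"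

definition subpaths :: "'v list \<Rightarrow> 'v list set" where
  "subpaths w = {take (r - q + 1) (drop q w) | q r. q < r \<and> r < length w}"

definition cpa_span :: "('v \<times> 'a list \<Rightarrow> 'k::field) set \<Rightarrow> ('v \<times> 'a list \<Rightarrow> 'k) set" where
  "cpa_span S = {f. \<exists>F c. finite F \<and> F \<subseteq> S \<and> f = (\<lambda>p. \<Sum>x\<in>F. c x * x p)}"

definition cpa_subspace :: "('v \<times> 'a list \<Rightarrow> 'k::field) set \<Rightarrow> bool" where
  "cpa_subspace S \<longleftrightarrow> cpa_zero \<in> S \<and> (\<forall>x\<in>S. \<forall>y\<in>S. cpa_add x y \<in> S)
     \<and> (\<forall>c. \<forall>x\<in>S. cpa_scale c x \<in> S)"

definition cpa_msum :: "('v \<times> 'a list \<Rightarrow> 'k::field) set \<Rightarrow> ('v \<times> 'a list \<Rightarrow> 'k) set \<Rightarrow> ('v \<times> 'a list \<Rightarrow> 'k) set" where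
  "cpa_msum S T = {cpa_add x y | x y. x \<in> S \<and> y \<in> T}"

(* Im \<phi>_\<omega>: image of \<Sum>_{\<omega>=\<omega>2\<omega>1} V^G_{\<omega>2} \<otimes> V^G_{\<omega>1} \<rightarrow> V^G_\<omega>
   (the image of a map out of a tensor product is spanned by images of pure tensors) *)
definition composite_inv :: "('a \<Rightarrow> 'v) \<Rightarrow> ('a \<Rightarrow> 'v) \<Rightarrow> (('v \<times> 'a list \<Rightarrow> 'k::field) \<Rightarrow> ('v \<times> 'a list \<Rightarrow> 'k)) set \<Rightarrow> 'v list \<Rightarrow> ('v \<times> 'a list \<Rightarrow> 'k) set" where
  "composite_inv s t G w = cpa_span (\<Union>j\<in>{1..<length w - 1}.
      {cpa_mult t x y | x y. x \<in> VG s t G (drop j w) \<and> y \<in> VG s t G (take (Suc j) w)})"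

definition is_irr_space :: "('a \<Rightarrow> 'v) \<Rightarrow> ('a \<Rightarrow> 'v) \<Rightarrow> (('v \<times> 'a list \<Rightarrow> 'k::field) \<Rightarrow> ('v \<times> 'a list \<Rightarrow> 'k)) set \<Rightarrow> 'v list \<Rightarrow> ('v \<times> 'a list \<Rightarrow> 'k) set \<Rightarrow> bool" where
  "is_irr_space s t G w I \<longleftrightarrow> cpa_subspace I \<and> I \<subseteq> VG s t G w
     \<and> I \<inter> composite_inv s t G w = {cpa_zero}
     \<and> cpa_msum I (composite_inv s t G w) = VG s t G w"

(* ordered partitions of m, listed as [m_1, ..., m_l] (m_1 = first arrows) *)
definition ord_partitions :: "nat \<Rightarrow> nat list set" where
  "ord_partitions m = {ps. ps \<noteq> [] \<and> (\<forall>x\<in>set ps. 0 < x) \<and> sum_list ps = m}"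

(* \<omega>_{m_n}: the n-th block (counting from the start of the path) *)
definition segment :: "'v list \<Rightarrow> nat list \<Rightarrow> nat \<Rightarrow> 'v list" where
  "segment w ps n = take (ps ! n + 1) (drop (sum_list (take n ps)) w)"

(* product x_l \<cdot> ... \<cdot> x_1 of the list [x_1, ..., x_l] *)
fun cpa_prodl :: "('a \<Rightarrow> 'v) \<Rightarrow> ('v \<times> 'a list \<Rightarrow> 'k::field) list \<Rightarrow> ('v \<times> 'a list \<Rightarrow> 'k)" where
  "cpa_prodl t [] = cpa_one"
| "cpa_prodl t (x # xs) = cpa_mult t (cpa_prodl t xs) x"

definition psi_image :: "('a \<Rightarrow> 'v) \<Rightarrow> ('v list \<Rightarrow> ('v \<times> 'a list \<Rightarrow> 'k::field) set) \<Rightarrow> 'v list \<Rightarrow> ('v \<times> 'a list \<Rightarrow> 'k) set" where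
  "psi_image t Irr w = cpa_span (\<Union>ps\<in>ord_partitions (length w - 1).
      {cpa_prodl t xs | xs. length xs = length ps \<and> (\<forall>n<length ps. xs ! n \<in> Irr (segment w ps n))})"

end

theory Submission
  imports Defs
begin

text \<open>
  An invariant on a path is an irreducible invariant plus a linear combination of products
  of invariants on two strictly shorter subpaths. By induction on the length, those factors
  are linear combinations of products of irreducible invariants along ordered partitions of
  their subpaths, and concatenating the two partitions gives an ordered partition of the
  whole path. Conversely, G acts by algebra automorphisms, so products of invariants are
  invariant and the image of \<open>\<psi>\<^sub>\<omega>\<close> lies in \<open>V\<^sup>G\<^sub>\<omega>\<close>.
\<close>

lemma pend_append: "pend t i (as @ bs) = pend t (pend t i as) bs"
  by (induction as arbitrary: i) auto

lemma pvalid_append: "pvalid s t i (as @ bs) \<longleftrightarrow> pvalid s t i as \<and> pvalid s t (pend t i as) bs"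
  by (induction as arbitrary: i) auto

lemma pverts_append: "pverts t i (as @ bs) = pverts t i as @ tl (pverts t (pend t i as) bs)"
proof (induction as arbitrary: i)
  case Nil
  show ?case by (cases bs) auto
qed simp

lemma cpa_mult_one_left:
  fixes t :: "'a \<Rightarrow> 'v"
  shows "cpa_mult t cpa_one f = f"
proof (intro ext, clarify)
  fix i and as :: "'a list"
  have "cpa_mult t cpa_one f (i, as) = (\<Sum>j\<le>length as. if j = length as then f (i, as) else 0)"
    unfolding cpa_mult_def cpa_one_def by (simp only: prod.case) (rule sum.cong; auto)
  then show "cpa_mult t cpa_one f (i, as) = f (i, as)" by simp
qed

lemma cpa_mult_one_right:
  fixes t :: "'a \<Rightarrow> 'v"
  shows "cpa_mult t f cpa_one = f"
proof (intro ext, clarify)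
  fix i and as :: "'a list"
  have "cpa_mult t f cpa_one (i, as) = (\<Sum>j\<le>length as. if j = 0 then f (i, as) else 0)"
    unfolding cpa_mult_def cpa_one_def by (simp only: prod.case) (rule sum.cong; auto)
  then show "cpa_mult t f cpa_one (i, as) = f (i, as)" by simp
qed

lemma cpa_mult_add_left: "cpa_mult t (cpa_add f g) h = cpa_add (cpa_mult t f h) (cpa_mult t g h)"
  unfolding cpa_mult_def cpa_add_def by (auto simp: sum.distrib ring_distribs)

lemma cpa_mult_add_right: "cpa_mult t h (cpa_add f g) = cpa_add (cpa_mult t h f) (cpa_mult t h g)"
  unfolding cpa_mult_def cpa_add_def by (auto simp: sum.distrib ring_distribs)

lemma cpa_mult_scale_left: "cpa_mult t (cpa_scale c f) h = cpa_scale c (cpa_mult t f h)"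
  unfolding cpa_mult_def cpa_scale_def by (auto simp: sum_distrib_left mult.assoc)

lemma cpa_mult_scale_right: "cpa_mult t h (cpa_scale c f) = cpa_scale c (cpa_mult t h f)"
  unfolding cpa_mult_def cpa_scale_def by (auto simp: sum_distrib_left mult_ac)

lemma cpa_mult_zero_left: "cpa_mult t cpa_zero h = cpa_zero"
  unfolding cpa_mult_def cpa_zero_def by auto

lemma cpa_mult_zero_right: "cpa_mult t h cpa_zero = cpa_zero"
  unfolding cpa_mult_def cpa_zero_def by auto

lemma cpa_mult_assoc:
  fixes t :: "'a \<Rightarrow> 'v"
  shows "cpa_mult t (cpa_mult t f g) h = cpa_mult t f (cpa_mult t g h)"
proof (intro ext, clarify)
  fix i and as :: "'a list"
  define n where "n = length as"
  define F where "F l j = f (pend t (pend t i (take l as)) (take j (drop l as)), drop j (drop l as))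
     * g (pend t i (take l as), take j (drop l as)) * h (i, take l as)" for l j
  have "cpa_mult t (cpa_mult t f g) h (i, as) = (\<Sum>l\<le>n. \<Sum>j\<le>n - l. F l j)"
    unfolding cpa_mult_def F_def n_def by (auto simp: sum_distrib_right)
  also have "\<dots> = (\<Sum>(l, j)\<in>{(l, j). l + j \<le> n}. F l j)"
    by (simp add: pairs_le_eq_Sigma sum.Sigma)
  also have "\<dots> = (\<Sum>k\<le>n. \<Sum>l\<le>k. F l (k - l))"
    by (rule sum.triangle_reindex_eq)
  also have "\<dots> = (\<Sum>k\<le>n. \<Sum>l\<le>k. f (pend t i (take k as), drop k as) *
         (g (pend t i (take l (take k as)), drop l (take k as)) * h (i, take l (take k as))))"
  proof (intro sum.cong refl)
    fix k l :: nat assume "l \<in> {..k}"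
    then have "take k as = take l as @ take (k - l) (drop l as)"
      by (metis atMost_iff le_add_diff_inverse take_add)
    then have "pend t i (take k as) = pend t (pend t i (take l as)) (take (k - l) (drop l as))"
      by (simp add: pend_append)
    with \<open>l \<in> {..k}\<close> show "F l (k - l) = f (pend t i (take k as), drop k as) *
         (g (pend t i (take l (take k as)), drop l (take k as)) * h (i, take l (take k as)))"
      unfolding F_def by (simp add: drop_take mult_ac)
  qed
  also have "\<dots> = cpa_mult t f (cpa_mult t g h) (i, as)"
    unfolding cpa_mult_def by (simp add: n_def sum_distrib_left)
  finally show "cpa_mult t (cpa_mult t f g) h (i, as) = cpa_mult t f (cpa_mult t g h) (i, as)" .
qed

lemma cpa_prodl_append: "cpa_prodl t (ys @ xs) = cpa_mult t (cpa_prodl t xs) (cpa_prodl t ys)"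
  by (induction ys) (simp_all add: cpa_mult_one_right cpa_mult_assoc)

lemma cpa_subspace_span: "cpa_subspace (cpa_span S)"
  unfolding cpa_subspace_def
proof (intro conjI ballI allI)
  show "cpa_zero \<in> cpa_span S"
    unfolding cpa_span_def cpa_zero_def by (intro CollectI exI[of _ "{}"]) auto
next
  fix x y assume "x \<in> cpa_span S" "y \<in> cpa_span S"
  then obtain F1 c1 F2 c2 where F1: "finite F1" "F1 \<subseteq> S" "x = (\<lambda>p. \<Sum>z\<in>F1. c1 z * z p)"
    and F2: "finite F2" "F2 \<subseteq> S" "y = (\<lambda>p. \<Sum>z\<in>F2. c2 z * z p)"
    unfolding cpa_span_def by blast
  define c where "c z = (if z \<in> F1 then c1 z else 0) + (if z \<in> F2 then c2 z else 0)" for z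
  have "cpa_add x y p = (\<Sum>z\<in>F1 \<union> F2. c z * z p)" for p
  proof -
    have "(\<Sum>z\<in>F1 \<union> F2. c z * z p) = (\<Sum>z\<in>F1 \<union> F2. if z \<in> F1 then c1 z * z p else 0)
        + (\<Sum>z\<in>F1 \<union> F2. if z \<in> F2 then c2 z * z p else 0)"
      unfolding sum.distrib[symmetric] by (rule sum.cong) (simp_all add: c_def ring_distribs)
    also have "\<dots> = (\<Sum>z\<in>F1. c1 z * z p) + (\<Sum>z\<in>F2. c2 z * z p)"
      using F1(1) F2(1)
      by (simp add: sum.inter_restrict[symmetric] Int_absorb1 Int_absorb2 Int_commute)
    finally show ?thesis using F1 F2 unfolding cpa_add_def by simp
  qed
  then show "cpa_add x y \<in> cpa_span S"
    unfolding cpa_span_def using F1(1,2) F2(1,2) by (intro CollectI exI[of _ "F1 \<union> F2"] exI[of _ c]) auto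
next
  fix a x assume "x \<in> cpa_span S"
  then obtain F c where F: "finite F" "F \<subseteq> S" "x = (\<lambda>p. \<Sum>z\<in>F. c z * z p)"
    unfolding cpa_span_def by blast
  then have "cpa_scale a x = (\<lambda>p. \<Sum>z\<in>F. (a * c z) * z p)"
    unfolding cpa_scale_def by (simp add: sum_distrib_left mult.assoc)
  then show "cpa_scale a x \<in> cpa_span S"
    unfolding cpa_span_def using F(1,2) by (intro CollectI exI[of _ F] exI[of _ "\<lambda>z. a * c z"]) auto
qed

lemma cpa_span_superset: "x \<in> S \<Longrightarrow> x \<in> cpa_span S"
  unfolding cpa_span_def by (intro CollectI exI[of _ "{x}"] exI[of _ "\<lambda>_. 1"]) auto

lemma cpa_span_minimal:
  assumes T: "cpa_subspace T" and "S \<subseteq> T"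
  shows "cpa_span S \<subseteq> T"
proof
  fix f assume "f \<in> cpa_span S"
  then obtain F c where F: "finite F" "F \<subseteq> S" and f: "f = (\<lambda>p. \<Sum>z\<in>F. c z * z p)"
    unfolding cpa_span_def by blast
  from F have "(\<lambda>p. \<Sum>z\<in>F. c z * z p) \<in> T"
  proof (induction F rule: finite_induct)
    case empty
    then show ?case using T unfolding cpa_subspace_def cpa_zero_def by simp
  next
    case (insert a F)
    have "(\<lambda>p. \<Sum>z\<in>insert a F. c z * z p) = cpa_add (cpa_scale (c a) a) (\<lambda>p. \<Sum>z\<in>F. c z * z p)"
      using insert unfolding cpa_add_def cpa_scale_def by auto
    then show ?case using T insert \<open>S \<subseteq> T\<close> unfolding cpa_subspace_def by auto
  qed
  then show "f \<in> T" using f by simp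
qed

lemma cpa_msum_subset:
  assumes "cpa_subspace U" "S \<subseteq> U" "T \<subseteq> U"
  shows "cpa_msum S T \<subseteq> U"
  using assms unfolding cpa_subspace_def cpa_msum_def by blast

lemma cpa_mult_span_closed:
  assumes U: "cpa_subspace U" and gen: "\<And>a b. a \<in> S \<Longrightarrow> b \<in> T \<Longrightarrow> cpa_mult t a b \<in> U"
    and x: "x \<in> cpa_span S" and y: "y \<in> cpa_span T"
  shows "cpa_mult t x y \<in> U"
proof -
  have "cpa_mult t x b \<in> U" if b: "b \<in> T" for b
  proof -
    have "cpa_subspace {x. cpa_mult t x b \<in> U}" using U
      by (simp add: cpa_subspace_def cpa_mult_add_left cpa_mult_scale_left cpa_mult_zero_left)
    moreover have "S \<subseteq> {x. cpa_mult t x b \<in> U}" using gen b by auto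
    ultimately show ?thesis using x cpa_span_minimal by blast
  qed
  moreover have "cpa_subspace {y. cpa_mult t x y \<in> U}" using U
    by (simp add: cpa_subspace_def cpa_mult_add_right cpa_mult_scale_right cpa_mult_zero_right)
  ultimately show ?thesis using y cpa_span_minimal[of "{y. cpa_mult t x y \<in> U}" T] by blast
qed

lemma cpa_mult_carrier:
  assumes "x \<in> cpa_carrier s t" "y \<in> cpa_carrier s t"
  shows "cpa_mult t x y \<in> cpa_carrier s t"
  unfolding cpa_carrier_def
proof (intro CollectI allI impI)
  fix i as assume "\<not> pvalid s t i as"
  then have "x (pend t i (take j as), drop j as) * y (i, take j as) = 0" for j
    using pvalid_append[of s t i "take j as" "drop j as"] assms unfolding cpa_carrier_def by auto
  then show "cpa_mult t x y (i, as) = 0" unfolding cpa_mult_def by (auto intro: sum.neutral)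
qed

lemma cpa_mult_Vsp:
  assumes "x \<in> Vsp s t w2" "y \<in> Vsp s t w1"
  shows "cpa_mult t x y \<in> Vsp s t (w1 @ tl w2)"
proof -
  have "pverts t i as = w1 @ tl w2" if nonzero: "cpa_mult t x y (i, as) \<noteq> 0" for i as
  proof -
    obtain j where "x (pend t i (take j as), drop j as) * y (i, take j as) \<noteq> 0"
      using nonzero unfolding cpa_mult_def by (auto elim: sum.not_neutral_contains_not_neutral)
    then have "pverts t (pend t i (take j as)) (drop j as) = w2" "pverts t i (take j as) = w1"
      using assms unfolding Vsp_def by auto
    then show ?thesis using pverts_append[of t i "take j as" "drop j as"] by simp
  qed
  moreover have "cpa_mult t x y \<in> cpa_carrier s t"
    using assms cpa_mult_carrier unfolding Vsp_def by blast
  ultimately show ?thesis unfolding Vsp_def by auto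
qed

lemma cpa_mult_VG:
  assumes aut: "\<forall>g\<in>G. cpa_aut s t g" and x: "x \<in> VG s t G w2" and y: "y \<in> VG s t G w1"
  shows "cpa_mult t x y \<in> VG s t G (w1 @ tl w2)"
proof -
  have "g (cpa_mult t x y) = cpa_mult t x y" if "g \<in> G" for g
  proof -
    have "g (cpa_mult t x y) = cpa_mult t (g x) (g y)"
      using aut that x y unfolding cpa_aut_def VG_def Vsp_def by blast
    then show ?thesis using that x y unfolding VG_def by simp
  qed
  moreover have "cpa_mult t x y \<in> Vsp s t (w1 @ tl w2)"
    using x y cpa_mult_Vsp unfolding VG_def by blast
  ultimately show ?thesis unfolding VG_def by blast
qed

lemma cpa_subspace_Vsp: "cpa_subspace (Vsp s t w)"
  unfolding cpa_subspace_def Vsp_def cpa_carrier_def cpa_zero_def cpa_add_def cpa_scale_def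
  by auto (metis add_0)

lemma cpa_aut_zero:
  assumes "cpa_aut s t g"
  shows "g cpa_zero = cpa_zero"
proof -
  have "cpa_zero \<in> cpa_carrier s t" unfolding cpa_carrier_def cpa_zero_def by simp
  then have "g (cpa_scale 0 cpa_zero) = cpa_scale 0 (g cpa_zero)"
    using assms unfolding cpa_aut_def by blast
  then show ?thesis unfolding cpa_scale_def cpa_zero_def by simp
qed

lemma cpa_subspace_VG:
  assumes aut: "\<forall>g\<in>G. cpa_aut s t g"
  shows "cpa_subspace (VG s t G w)"
proof -
  have V: "cpa_subspace (Vsp s t w)" and C: "Vsp s t w \<subseteq> cpa_carrier s t"
    using cpa_subspace_Vsp unfolding Vsp_def by auto
  have "g (cpa_add x y) = cpa_add x y" "g (cpa_scale c x) = cpa_scale c x"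
    if g: "g \<in> G" and x: "x \<in> VG s t G w" and y: "y \<in> VG s t G w" for g x y c
  proof -
    have "x \<in> cpa_carrier s t" "y \<in> cpa_carrier s t" using x y C unfolding VG_def by auto
    then have "g (cpa_add x y) = cpa_add (g x) (g y)" "g (cpa_scale c x) = cpa_scale c (g x)"
      using aut g unfolding cpa_aut_def by blast+
    then show "g (cpa_add x y) = cpa_add x y" "g (cpa_scale c x) = cpa_scale c x"
      using g x y unfolding VG_def by simp_all
  qed
  moreover have "g cpa_zero = cpa_zero" if "g \<in> G" for g
    using aut that cpa_aut_zero by blast
  ultimately show ?thesis
    using V unfolding cpa_subspace_def VG_def by auto
qed

lemma subpaths_length: "w' \<in> subpaths w \<Longrightarrow> 2 \<le> length w'"
  unfolding subpaths_def by auto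

lemma self_in_subpaths: "2 \<le> length w \<Longrightarrow> w \<in> subpaths w"
  unfolding subpaths_def by (intro CollectI exI[of _ 0] exI[of _ "length w - 1"]) auto

lemma subpaths_drop:
  assumes "w' \<in> subpaths w" "j < length w' - 1"
  shows "drop j w' \<in> subpaths w"
proof -
  obtain q r where qr: "q < r" "r < length w" "w' = take (r - q + 1) (drop q w)"
    using assms(1) unfolding subpaths_def by auto
  then have "drop j w' = take (r - (q + j) + 1) (drop (q + j) w)" "q + j < r"
    using assms(2) by (auto simp: drop_take add.commute Suc_diff_le)
  then show ?thesis using qr unfolding subpaths_def by blast
qed

lemma subpaths_take:
  assumes "w' \<in> subpaths w" "0 < j" "j < length w'"
  shows "take (Suc j) w' \<in> subpaths w"
proof -
  obtain q r where qr: "q < r" "r < length w" "w' = take (r - q + 1) (drop q w)"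
    using assms(1) unfolding subpaths_def by auto
  then have "length w' = r - q + 1" by simp
  then have "take (Suc j) w' = take ((q + j) - q + 1) (drop q w)" "q < q + j" "q + j < length w"
    using qr assms by (auto simp: min_def)
  then show ?thesis unfolding subpaths_def by blast
qed

lemma sum_list_take_le: "sum_list (take k ns) \<le> sum_list (ns :: nat list)"
  by (metis append_take_drop_id le_add1 sum_list_append)

lemma segment_in_subpaths:
  assumes "ps \<in> ord_partitions (length w - 1)" "n < length ps"
  shows "segment w ps n \<in> subpaths w"
proof -
  define q where "q = sum_list (take n ps)"
  have "0 < ps ! n" using assms unfolding ord_partitions_def by auto
  moreover have "q + ps ! n = sum_list (take (Suc n) ps)"
    using assms(2) unfolding q_def by (simp add: take_Suc_conv_app_nth)
  moreover have "sum_list (take (Suc n) ps) \<le> length w - 1"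
    using assms(1) sum_list_take_le[of "Suc n" ps] unfolding ord_partitions_def by simp
  ultimately have "q < q + ps ! n" "q + ps ! n < length w" by linarith+
  moreover have "segment w ps n = take ((q + ps ! n) - q + 1) (drop q w)"
    unfolding segment_def q_def by simp
  ultimately show ?thesis unfolding subpaths_def by blast
qed

lemma segment_append:
  assumes "j < length w" "sum_list ps1 = j"
  shows "segment w (ps1 @ ps2) n = (if n < length ps1 then segment (take (Suc j) w) ps1 n
           else segment (drop j w) ps2 (n - length ps1))"
proof (cases "n < length ps1")
  case True
  define q where "q = sum_list (take n ps1)"
  have "q + ps1 ! n = sum_list (take (Suc n) ps1)"
    using True unfolding q_def by (simp add: take_Suc_conv_app_nth)
  then have "q + ps1 ! n \<le> j"
    using assms(2) sum_list_take_le[of "Suc n" ps1] by simp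
  then have "segment (take (Suc j) w) ps1 n = take (ps1 ! n + 1) (drop q w)"
    unfolding segment_def q_def[symmetric] by (simp add: drop_take min_def)
  moreover have "segment w (ps1 @ ps2) n = take (ps1 ! n + 1) (drop q w)"
    unfolding segment_def q_def using True by (simp add: nth_append)
  ultimately show ?thesis using True by simp
next
  case False
  then show ?thesis using assms unfolding segment_def by (simp add: nth_append add.commute)
qed

lemma cpa_prodl_VG:
  assumes aut: "\<forall>g\<in>G. cpa_aut s t g"
  shows "ps \<in> ord_partitions (length w - 1) \<Longrightarrow> length xs = length ps
    \<Longrightarrow> \<forall>n<length ps. xs ! n \<in> VG s t G (segment w ps n) \<Longrightarrow> cpa_prodl t xs \<in> VG s t G w"
proof (induction ps arbitrary: w xs)
  case Nil
  then show ?case unfolding ord_partitions_def by simp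
next
  case (Cons p ps)
  obtain x xs' where xs: "xs = x # xs'" "length xs' = length ps"
    using Cons.prems(2) by (cases xs) auto
  have x: "x \<in> VG s t G (take (Suc p) w)"
    using Cons.prems(3) xs unfolding segment_def by force
  show ?case
  proof (cases "ps = []")
    case True
    then have "take (Suc p) w = w" using Cons.prems(1) unfolding ord_partitions_def by simp
    then show ?thesis using True xs x by (simp add: cpa_mult_one_left)
  next
    case False
    then have "ps \<in> ord_partitions (length (drop p w) - 1)"
      using Cons.prems(1) unfolding ord_partitions_def by auto
    moreover have "\<forall>n<length ps. xs' ! n \<in> VG s t G (segment (drop p w) ps n)"
    proof (intro allI impI)
      fix n assume "n < length ps"
      moreover have "segment w (p # ps) (Suc n) = segment (drop p w) ps n"
        unfolding segment_def by (simp add: add.commute)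
      ultimately show "xs' ! n \<in> VG s t G (segment (drop p w) ps n)"
        using Cons.prems(3) xs(1) by (metis Suc_less_eq length_Cons nth_Cons_Suc)
    qed
    ultimately have "cpa_prodl t xs' \<in> VG s t G (drop p w)"
      using Cons.IH xs(2) by blast
    then have "cpa_mult t (cpa_prodl t xs') x \<in> VG s t G (take (Suc p) w @ tl (drop p w))"
      using cpa_mult_VG[OF aut _ x] by blast
    moreover have "take (Suc p) w @ tl (drop p w) = w"
      by (metis append_take_drop_id drop_Suc tl_drop)
    ultimately show ?thesis using xs by simp
  qed
qed

definition irr_products ::
    "('a \<Rightarrow> 'v) \<Rightarrow> ('v list \<Rightarrow> ('v \<times> 'a list \<Rightarrow> 'k::field) set) \<Rightarrow> 'v list \<Rightarrow> ('v \<times> 'a list \<Rightarrow> 'k) set"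
  where "irr_products t Irr w = (\<Union>ps\<in>ord_partitions (length w - 1).
      {cpa_prodl t xs | xs. length xs = length ps \<and> (\<forall>n<length ps. xs ! n \<in> Irr (segment w ps n))})"

lemma psi_image_eq_span: "psi_image t Irr w = cpa_span (irr_products t Irr w)"
  unfolding psi_image_def irr_products_def ..

lemma cpa_subspace_psi_image: "cpa_subspace (psi_image t Irr w)"
  unfolding psi_image_eq_span by (rule cpa_subspace_span)

lemma psi_image_subset_VG:
  assumes aut: "\<forall>g\<in>G. cpa_aut s t g" and Irr: "\<forall>w'\<in>subpaths w. Irr w' \<subseteq> VG s t G w'"
  shows "psi_image t Irr w \<subseteq> VG s t G w"
  unfolding psi_image_eq_span
proof (rule cpa_span_minimal[OF cpa_subspace_VG[OF aut]], rule subsetI)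
  fix f assume "f \<in> irr_products t Irr w"
  then obtain ps xs where ps: "ps \<in> ord_partitions (length w - 1)" and f: "f = cpa_prodl t xs"
    and xs: "length xs = length ps" "\<forall>n<length ps. xs ! n \<in> Irr (segment w ps n)"
    unfolding irr_products_def by blast
  then have "\<forall>n<length ps. xs ! n \<in> VG s t G (segment w ps n)"
    using Irr segment_in_subpaths by blast
  then show "f \<in> VG s t G w" using cpa_prodl_VG[OF aut ps xs(1)] f by blast
qed

lemma Irr_subset_psi_image:
  assumes "2 \<le> length w"
  shows "Irr w \<subseteq> psi_image t Irr w"
proof
  fix x assume "x \<in> Irr w"
  moreover have "[length w - 1] \<in> ord_partitions (length w - 1)"
    using assms unfolding ord_partitions_def by auto
  moreover have "segment w [length w - 1] 0 = w" unfolding segment_def using assms by simp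
  moreover have "cpa_prodl t [x] = x" by (simp add: cpa_mult_one_left)
  ultimately have "x \<in> irr_products t Irr w"
    unfolding irr_products_def by (intro UN_I[of "[length w - 1]"]) (auto intro!: exI[of _ "[x]"])
  then show "x \<in> psi_image t Irr w" unfolding psi_image_eq_span by (rule cpa_span_superset)
qed

lemma irr_products_mult:
  assumes j: "j < length w"
    and x: "x \<in> irr_products t Irr (drop j w)" and y: "y \<in> irr_products t Irr (take (Suc j) w)"
  shows "cpa_mult t x y \<in> irr_products t Irr w"
proof -
  obtain ps2 xs where ps2: "ps2 \<in> ord_partitions (length (drop j w) - 1)" and x_eq: "x = cpa_prodl t xs"
    and xs: "length xs = length ps2" "\<forall>n<length ps2. xs ! n \<in> Irr (segment (drop j w) ps2 n)"
    using x unfolding irr_products_def by blast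
  obtain ps1 ys where ps1: "ps1 \<in> ord_partitions (length (take (Suc j) w) - 1)" and y_eq: "y = cpa_prodl t ys"
    and ys: "length ys = length ps1" "\<forall>n<length ps1. ys ! n \<in> Irr (segment (take (Suc j) w) ps1 n)"
    using y unfolding irr_products_def by blast
  have "sum_list ps1 = j" using ps1 j unfolding ord_partitions_def by simp
  note segment = segment_append[OF j this]
  have "(ys @ xs) ! n \<in> Irr (segment w (ps1 @ ps2) n)" if "n < length (ps1 @ ps2)" for n
  proof (cases "n < length ps1")
    case True
    then show ?thesis using ys segment by (simp add: nth_append)
  next
    case False
    then show ?thesis using that xs ys segment by (simp add: nth_append)
  qed
  moreover have "ps1 @ ps2 \<in> ord_partitions (length w - 1)"
    using ps1 ps2 j unfolding ord_partitions_def by auto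
  moreover have "length (ys @ xs) = length (ps1 @ ps2)" using xs(1) ys(1) by simp
  moreover have "cpa_mult t x y = cpa_prodl t (ys @ xs)"
    unfolding x_eq y_eq by (rule cpa_prodl_append[symmetric])
  ultimately show ?thesis unfolding irr_products_def by blast
qed

lemma psi_image_mult:
  assumes "j < length w"
    and "x \<in> psi_image t Irr (drop j w)" and "y \<in> psi_image t Irr (take (Suc j) w)"
  shows "cpa_mult t x y \<in> psi_image t Irr w"
proof (rule cpa_mult_span_closed[OF cpa_subspace_psi_image])
  fix a b assume "a \<in> irr_products t Irr (drop j w)" "b \<in> irr_products t Irr (take (Suc j) w)"
  then show "cpa_mult t a b \<in> psi_image t Irr w"
    unfolding psi_image_eq_span using irr_products_mult[OF assms(1)] by (blast intro: cpa_span_superset)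
qed (use assms(2,3) in \<open>simp_all add: psi_image_eq_span\<close>)

lemma composite_inv_subset_psi_image:
  assumes "\<And>j. 1 \<le> j \<Longrightarrow> j < length w - 1 \<Longrightarrow>
      VG s t G (drop j w) \<subseteq> psi_image t Irr (drop j w)
    \<and> VG s t G (take (Suc j) w) \<subseteq> psi_image t Irr (take (Suc j) w)"
  shows "composite_inv s t G w \<subseteq> psi_image t Irr w"
  unfolding composite_inv_def
proof (rule cpa_span_minimal[OF cpa_subspace_psi_image], rule subsetI)
  fix f assume "f \<in> (\<Union>j\<in>{1..<length w - 1}.
      {cpa_mult t x y | x y. x \<in> VG s t G (drop j w) \<and> y \<in> VG s t G (take (Suc j) w)})"
  then obtain j where j: "j \<in> {1..<length w - 1}"
    and "f \<in> {cpa_mult t x y | x y. x \<in> VG s t G (drop j w) \<and> y \<in> VG s t G (take (Suc j) w)}"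
    by blast
  then obtain x y where f: "f = cpa_mult t x y"
    and x: "x \<in> VG s t G (drop j w)" and y: "y \<in> VG s t G (take (Suc j) w)"
    by blast
  have "x \<in> psi_image t Irr (drop j w)" "y \<in> psi_image t Irr (take (Suc j) w)"
    using assms j x y by auto
  moreover have "j < length w" using j by auto
  ultimately show "f \<in> psi_image t Irr w" using psi_image_mult f by blast
qed

lemma VG_subset_psi_image:
  assumes Irr: "\<forall>w'\<in>subpaths w. is_irr_space s t G w' (Irr w')"
  shows "w' \<in> subpaths w \<Longrightarrow> VG s t G w' \<subseteq> psi_image t Irr w'"
proof (induction "length w'" arbitrary: w' rule: less_induct)
  case less
  have "VG s t G (drop j w') \<subseteq> psi_image t Irr (drop j w')
      \<and> VG s t G (take (Suc j) w') \<subseteq> psi_image t Irr (take (Suc j) w')"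
    if j: "1 \<le> j" "j < length w' - 1" for j
  proof
    have "length (drop j w') < length w'" "drop j w' \<in> subpaths w"
      using subpaths_drop[OF less.prems j(2)] j by auto
    then show "VG s t G (drop j w') \<subseteq> psi_image t Irr (drop j w')" by (rule less.hyps)
    have "length (take (Suc j) w') < length w'" "take (Suc j) w' \<in> subpaths w"
      using subpaths_take[OF less.prems] j by auto
    then show "VG s t G (take (Suc j) w') \<subseteq> psi_image t Irr (take (Suc j) w')" by (rule less.hyps)
  qed
  then have "composite_inv s t G w' \<subseteq> psi_image t Irr w'"
    by (intro composite_inv_subset_psi_image) blast
  moreover have "Irr w' \<subseteq> psi_image t Irr w'"
    using less.prems subpaths_length Irr_subset_psi_image by blast
  ultimately have "cpa_msum (Irr w') (composite_inv s t G w') \<subseteq> psi_image t Irr w'"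
    using cpa_msum_subset[OF cpa_subspace_psi_image] by blast
  moreover have "cpa_msum (Irr w') (composite_inv s t G w') = VG s t G w'"
    using Irr less.prems unfolding is_irr_space_def by blast
  ultimately show ?case by simp
qed

theorem mainTheorem2:
  fixes s t :: "'a \<Rightarrow> 'v"
    and G :: "(('v \<times> 'a list \<Rightarrow> 'k::field) \<Rightarrow> ('v \<times> 'a list \<Rightarrow> 'k)) set"
    and w :: "'v list"
    and Irr :: "'v list \<Rightarrow> ('v \<times> 'a list \<Rightarrow> 'k) set"
  assumes "\<forall>i j. finite {a. s a = i \<and> t a = j}"
    and "cpa_aut_group s t G"
    and "homogeneous_group s t G"
    and "invariant_on_Sigma s t G"
    and "is_path_space s t w"
    and "\<forall>w' \<in> subpaths w. is_irr_space s t G w' (Irr w')"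
  shows "psi_image t Irr w = VG s t G w"
proof
  have "\<forall>g\<in>G. cpa_aut s t g" using assms(2) unfolding cpa_aut_group_def by blast
  moreover have "\<forall>w'\<in>subpaths w. Irr w' \<subseteq> VG s t G w'"
    using assms(6) unfolding is_irr_space_def by blast
  ultimately show "psi_image t Irr w \<subseteq> VG s t G w" by (rule psi_image_subset_VG)
next
  have "w \<in> subpaths w" using assms(5) self_in_subpaths unfolding is_path_space_def by blast
  then show "VG s t G w \<subseteq> psi_image t Irr w" using VG_subset_psi_image[OF assms(6)] by blast
qed

end
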